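(* Let $L\in\mathbb Z_{\ge1}$, $\delta>0$, $C>0$. For all $N\ge1$ and $z$ with $\mathrm{Re}(z)\le-\delta$, $|z|\le C$, $$-\chi(-z,N)=\frac{N}{z}\mathrm{Li}_2(e^{z})-\frac12\log(1-e^{z})+\sum_{\ell=2}^{L}\frac{B_\ell}{\ell!}\Big(\frac{z}{N}\Big)^{\ell-1}\mathrm{Li}_{2-\ell}(e^{z})+O\Big(\frac1{N^{L}}\Big),$$ with principal logarithm and an implied constant depending only on $L,\delta,C$.
   Context: For $\mathrm{Re}(w)>0$ and $t>0$, $\chi(w,t):=\sum_{r=1}^\infty\dfrac{e^{-rw}}{r(e^{rw/t}-1)}$. Polylogarithms: $\mathrm{Li}_s(u)=\sum_{n\ge1}u^n/n^s$ for $|u|<1$. $B_n$ are the Bernoulli numbers ($z/(e^z-1)=\sum B_nz^n/n!$). *)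

theory Defs
  imports "HOL-Analysis.Analysis" "HOL-Computational_Algebra.Formal_Power_Series"
begin

definition bernoulli :: "nat \<Rightarrow> real" where
  "bernoulli n = fact n * fps_nth (fps_X / (fps_exp 1 - 1)) n"

definition polylog :: "int \<Rightarrow> complex \<Rightarrow> complex" where
  "polylog s u = (\<Sum>n. u ^ Suc n / (of_nat (Suc n)) powi s)"

definition chi :: "complex \<Rightarrow> real \<Rightarrow> complex" where
  "chi w t = (\<Sum>r. exp (- of_nat (Suc r) * w) /
                 (of_nat (Suc r) * (exp (of_nat (Suc r) * w / of_real t) - 1)))"

end

theory Submission
  imports Defs
begin

text \<open>
  With x_r = r z / N, the r-th term of -chi(-z, N) is exp(r z) / r * 1 / (1 - exp(-x_r)).
  Replacing 1 / (1 - exp(-x)) by its truncated Laurent expansion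
  1/x + 1/2 + \<Sum>_{l=2..L} B_l / l! * x^(l-1) and summing over r yields exactly the main terms,
  each a multiple of a polylogarithm. Since Re z \<le> -\<delta> and |z| \<le> C, every x_r lies in the cone
  Re x \<le> -(\<delta>/C) |x|, on which the expansion error is O(|x|^L) uniformly: near 0 by the Taylor
  expansion of x / (exp x - 1), far from 0 because 1 / (1 - exp(-x)) stays bounded there.
  So the total error is at most K (C/N)^L \<Sum>_r exp(-\<delta> r) r^(L-1).
\<close>

lemma fps_exp_minus_1_nonzero: "fps_exp 1 - 1 \<noteq> (0 :: 'a::field_char_0 fps)"
proof
  assume "fps_exp 1 - 1 = (0 :: 'a fps)"
  then have "fps_nth (fps_exp 1 - 1 :: 'a fps) 1 = 0" by simp
  then show False by simp
qed

lemma subdegree_fps_exp_minus_1: "subdegree (fps_exp 1 - 1 :: 'a::field_char_0 fps) = 1"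
  by (rule subdegreeI) auto

lemma bernoulli_fps_times_exp_minus_1:
  "Abs_fps (\<lambda>n. of_real (bernoulli n / fact n) :: 'a::real_field) * (fps_exp 1 - 1) = fps_X"
proof (rule fps_ext)
  fix n
  have real_eq: "fps_X / (fps_exp 1 - 1) * (fps_exp 1 - 1) = (fps_X :: real fps)"
    by (rule fps_times_divide_eq[OF fps_exp_minus_1_nonzero])
       (simp only: subdegree_fps_exp_minus_1, simp)
  have "fps_nth (Abs_fps (\<lambda>n. of_real (bernoulli n / fact n) :: 'a) * (fps_exp 1 - 1)) n
        = of_real (fps_nth (fps_X / (fps_exp 1 - 1) * (fps_exp 1 - 1) :: real fps) n)"
    by (simp add: fps_mult_nth bernoulli_def of_real_sum) (intro sum.cong, auto)
  also have "\<dots> = fps_nth fps_X n"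
    by (simp add: real_eq)
  finally show "fps_nth (Abs_fps (\<lambda>n. of_real (bernoulli n / fact n) :: 'a) * (fps_exp 1 - 1)) n
        = fps_nth fps_X n" .
qed

lemma fps_bernoulli:
  "fps_X / (fps_exp 1 - 1) = Abs_fps (\<lambda>n. of_real (bernoulli n / fact n) :: 'a::real_field)"
  by (metis bernoulli_fps_times_exp_minus_1 fps_divide_times_eq fps_exp_minus_1_nonzero)

lemma bernoulli_0: "bernoulli 0 = 1"
  using arg_cong[OF bernoulli_fps_times_exp_minus_1[where 'a=real], of "\<lambda>F. fps_nth F 1"]
  by (simp add: fps_mult_nth)

lemma bernoulli_1: "bernoulli 1 = - 1 / 2"
  using arg_cong[OF bernoulli_fps_times_exp_minus_1[where 'a=real], of "\<lambda>F. fps_nth F 2"]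
  by (simp add: fps_mult_nth numeral_2_eq_2 bernoulli_0)

lemma has_fps_expansion_bernoulli:
  "(\<lambda>x::'a::{banach, real_normed_field}. if x = 0 then 1 else x / (exp x - 1))
     has_fps_expansion Abs_fps (\<lambda>n. of_real (bernoulli n / fact n))"
  unfolding fps_bernoulli[symmetric]
  by (intro has_fps_expansion_divide has_fps_expansion_diff has_fps_expansion_exp1
        has_fps_expansion_1 has_fps_expansion_fps_X fps_exp_minus_1_nonzero)
     (simp_all only: subdegree_fps_exp_minus_1, simp_all)

lemma eval_fps_eq_sum_plus_shift:
  fixes F :: "'a::{banach, real_normed_div_algebra, comm_ring_1} fps"
  assumes "norm z < fps_conv_radius F"
  shows "eval_fps F z = (\<Sum>n\<le>L. fps_nth F n * z ^ n) + z ^ Suc L * eval_fps (fps_shift (Suc L) F) z"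
proof -
  have "(\<lambda>n. fps_nth (fps_shift (Suc L) F) n * z ^ n) sums eval_fps (fps_shift (Suc L) F) z"
    by (rule sums_eval_fps) (simp add: assms)
  from sums_mult[OF this, of "z ^ Suc L"]
  have "(\<lambda>n. fps_nth F (n + Suc L) * z ^ (n + Suc L)) sums
          (z ^ Suc L * eval_fps (fps_shift (Suc L) F) z)"
    by (simp add: power_add mult_ac)
  then have "(\<lambda>n. fps_nth F n * z ^ n) sums
          (z ^ Suc L * eval_fps (fps_shift (Suc L) F) z + (\<Sum>n<Suc L. fps_nth F n * z ^ n))"
    by (subst (asm) sums_iff_shift)
  from sums_unique2[OF sums_eval_fps[OF assms] this] show ?thesis
    by (simp add: lessThan_Suc_atMost add_ac)
qed

lemma has_fps_expansion_taylor_bound: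
  fixes F :: "'a::{banach, real_normed_field} fps"
  assumes "f has_fps_expansion F"
  shows "\<exists>\<rho>>0. \<exists>M. \<forall>y. norm y < \<rho> \<longrightarrow>
           norm (f y - (\<Sum>n\<le>L. fps_nth F n * y ^ n)) \<le> M * norm y ^ Suc L"
proof -
  define S where "S = fps_shift (Suc L) F"
  have R0: "fps_conv_radius F > 0"
    using assms by (simp add: has_fps_expansion_def)
  then have "isCont (eval_fps S) 0"
    by (intro continuous_eval_fps) (simp add: S_def zero_ereal_def)
  then have "eventually (\<lambda>y. dist (eval_fps S y) (eval_fps S 0) < 1) (nhds 0)"
    by (intro tendstoD) (simp_all add: isCont_def tendsto_at_iff_tendsto_nhds)
  moreover have "eventually (\<lambda>y. eval_fps F y = f y) (nhds 0)"
    using assms by (auto simp: has_fps_expansion_def)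
  moreover have "eventually (\<lambda>y. y \<in> eball 0 (fps_conv_radius F)) (nhds 0)"
    using R0 by (intro eventually_nhds_in_open) (auto simp: zero_ereal_def)
  ultimately have "eventually (\<lambda>y. norm (f y - (\<Sum>n\<le>L. fps_nth F n * y ^ n))
                     \<le> (norm (eval_fps S 0) + 1) * norm y ^ Suc L) (nhds 0)"
  proof eventually_elim
    case (elim y)
    then have "norm (eval_fps S y) \<le> norm (eval_fps S 0) + 1"
      using norm_triangle_ineq2[of "eval_fps S y" "eval_fps S 0"] by (simp add: dist_norm)
    moreover have "norm y < fps_conv_radius F"
      using elim(3) by simp
    then have "f y - (\<Sum>n\<le>L. fps_nth F n * y ^ n) = y ^ Suc L * eval_fps S y"
      using eval_fps_eq_sum_plus_shift[of y F L] elim(2) by (simp add: S_def)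
    ultimately show ?case
      by (simp add: norm_mult norm_power mult_right_mono mult.commute)
  qed
  then show ?thesis
    unfolding eventually_nhds_metric dist_norm by auto
qed

text \<open>The truncated Laurent expansion of 1 / (1 - exp(-x)) = 1 + 1 / (exp x - 1) at 0; the extra 1
  turns the coefficient B_1 = -1/2 of x / (exp x - 1) into +1/2.\<close>

definition bernoulli_laurent :: "nat \<Rightarrow> complex \<Rightarrow> complex" where
  "bernoulli_laurent L x = 1 / x + 1 / 2 + (\<Sum>l=2..L. of_real (bernoulli l / fact l) * x ^ (l - 1))"

lemma bernoulli_laurent_error_eq:
  assumes "L \<ge> 1" "x \<noteq> 0" "exp x \<noteq> 1"
  shows "x * (1 / (1 - exp (- x)) - bernoulli_laurent L x)
           = x / (exp x - 1) - (\<Sum>n\<le>L. of_real (bernoulli n / fact n) * x ^ n)"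
proof -
  have "(\<Sum>n\<le>L. of_real (bernoulli n / fact n) * x ^ n)
          = 1 - x / 2 + (\<Sum>l=2..L. of_real (bernoulli l / fact l) * x ^ l)"
    using assms(1)
    by (simp add: atMost_atLeast0 sum.atLeast_Suc_atMost numeral_2_eq_2
                  bernoulli_0 bernoulli_1[unfolded One_nat_def])
  moreover have "x * (\<Sum>l=2..L. of_real (bernoulli l / fact l) * x ^ (l - 1))
                   = (\<Sum>l=2..L. of_real (bernoulli l / fact l) * x ^ l)"
    unfolding sum_distrib_left
    by (intro sum.cong refl) (auto simp: power_eq_if)
  moreover have "x * (1 / (1 - exp (- x))) = x / (exp x - 1) + x"
    using assms(3) by (simp add: exp_minus field_simps)
  ultimately show ?thesis
    using assms(2) by (simp add: bernoulli_laurent_def algebra_simps)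
qed

lemma power_le_power_div_of_le:
  fixes \<rho> t :: real
  assumes "0 < \<rho>" "\<rho> \<le> t" "k \<le> L"
  shows "t ^ k \<le> t ^ L / \<rho> ^ (L - k)"
proof -
  have "t ^ k * \<rho> ^ (L - k) \<le> t ^ k * t ^ (L - k)"
    using assms by (intro mult_left_mono power_mono) auto
  also have "\<dots> = t ^ L"
    using assms(3) by (simp flip: power_add)
  finally show ?thesis
    using assms(1) by (simp add: pos_le_divide_eq)
qed

lemma norm_recip_one_minus_exp_neg_le:
  assumes "c \<le> - Re x" "0 < c"
  shows "norm (1 / (1 - exp (- x))) \<le> 1 / (exp c - 1)"
proof -
  have "exp c - 1 \<le> norm (exp (- x)) - norm (1::complex)"
    using assms(1) by (simp add: norm_exp_eq_Re)
  also have "\<dots> \<le> norm (1 - exp (- x))"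
    by (metis norm_minus_commute norm_triangle_ineq2)
  finally have "exp c - 1 \<le> norm (1 - exp (- x))" .
  moreover have "0 < exp c - 1"
    using assms(2) by simp
  ultimately show ?thesis
    by (simp add: norm_divide frac_le)
qed

lemma bernoulli_laurent_error_far:
  assumes "0 < a" "0 < \<rho>"
  shows "\<exists>K. \<forall>x. \<rho> \<le> norm x \<longrightarrow> Re x \<le> - a * norm x \<longrightarrow>
           norm (1 / (1 - exp (- x)) - bernoulli_laurent L x) \<le> K * norm x ^ L"
proof -
  define c where "c l = norm (of_real (bernoulli l / fact l) :: complex)" for l
  define A where "A = 1 / (exp (a * \<rho>) - 1) + 1 / \<rho> + 1 / 2"
  have "norm (1 / (1 - exp (- x)) - bernoulli_laurent L x)
          \<le> (A / \<rho> ^ L + (\<Sum>l=2..L. c l / \<rho> ^ (L - (l - 1)))) * norm x ^ L"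
    if x: "\<rho> \<le> norm x" "Re x \<le> - a * norm x" for x
  proof -
    have "a * \<rho> \<le> - Re x"
      using x assms mult_left_mono[OF x(1), of a] by linarith
    then have E: "norm (1 / (1 - exp (- x))) \<le> 1 / (exp (a * \<rho>) - 1)"
      using assms by (intro norm_recip_one_minus_exp_neg_le) auto
    have "norm (1 / x) \<le> 1 / \<rho>"
      using x assms by (simp add: norm_divide frac_le)
    then have "norm (bernoulli_laurent L x) \<le> 1 / \<rho> + 1 / 2 + (\<Sum>l=2..L. c l * norm x ^ (l - 1))"
      unfolding bernoulli_laurent_def c_def
      by (intro norm_triangle_le add_mono order_trans[OF norm_sum] sum_mono)
         (auto simp: norm_mult norm_power norm_divide)
    with E have "norm (1 / (1 - exp (- x)) - bernoulli_laurent L x)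
                   \<le> A * norm x ^ 0 + (\<Sum>l=2..L. c l * norm x ^ (l - 1))"
      unfolding A_def using norm_triangle_ineq4[of "1 / (1 - exp (- x))" "bernoulli_laurent L x"]
      by (simp only: power_0 mult_1_right)
    also have "\<dots> \<le> A * (norm x ^ L / \<rho> ^ (L - 0))
                      + (\<Sum>l=2..L. c l * (norm x ^ L / \<rho> ^ (L - (l - 1))))"
    proof (intro add_mono mult_left_mono sum_mono)
      show "norm x ^ 0 \<le> norm x ^ L / \<rho> ^ (L - 0)"
        using assms x by (intro power_le_power_div_of_le) auto
      show "norm x ^ (l - 1) \<le> norm x ^ L / \<rho> ^ (L - (l - 1))" if "l \<in> {2..L}" for l
        using assms x that by (intro power_le_power_div_of_le) auto
      show "0 \<le> A"
        using assms by (simp add: A_def)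
    qed (simp add: c_def)
    finally show ?thesis
      by (simp add: sum_distrib_right distrib_right)
  qed
  then show ?thesis
    by blast
qed

lemma bernoulli_laurent_error_cone:
  assumes "0 < a" "L \<ge> 1"
  shows "\<exists>K\<ge>0. \<forall>x. x \<noteq> 0 \<longrightarrow> Re x \<le> - a * norm x \<longrightarrow>
           norm (1 / (1 - exp (- x)) - bernoulli_laurent L x) \<le> K * norm x ^ L"
proof -
  obtain \<rho> M where "\<rho> > 0" and near: "\<And>x::complex. norm x < \<rho> \<Longrightarrow>
      norm ((if x = 0 then 1 else x / (exp x - 1)) - (\<Sum>n\<le>L. of_real (bernoulli n / fact n) * x ^ n))
        \<le> M * norm x ^ Suc L"
    using has_fps_expansion_taylor_bound[OF has_fps_expansion_bernoulli, of L]
    unfolding fps_nth_Abs_fps by blast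
  obtain K where far: "\<And>x. \<rho> \<le> norm x \<Longrightarrow> Re x \<le> - a * norm x \<Longrightarrow>
      norm (1 / (1 - exp (- x)) - bernoulli_laurent L x) \<le> K * norm x ^ L"
    using bernoulli_laurent_error_far[OF assms(1) \<open>\<rho> > 0\<close>] by blast
  have "norm (1 / (1 - exp (- x)) - bernoulli_laurent L x) \<le> max 0 (max M K) * norm x ^ L"
    if "x \<noteq> 0" "Re x \<le> - a * norm x" for x
  proof (cases "norm x < \<rho>")
    case True
    have "0 < a * norm x"
      using that(1) assms(1) by simp
    then have "norm (exp x) < 1"
      using that(2) by (simp add: norm_exp_eq_Re)
    then have "exp x \<noteq> 1"
      by (metis norm_one less_irrefl)
    have "norm x * norm (1 / (1 - exp (- x)) - bernoulli_laurent L x)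
            = norm (x / (exp x - 1) - (\<Sum>n\<le>L. of_real (bernoulli n / fact n) * x ^ n))"
      by (metis bernoulli_laurent_error_eq[OF assms(2) \<open>x \<noteq> 0\<close> \<open>exp x \<noteq> 1\<close>] norm_mult)
    also have "\<dots> \<le> norm x * (M * norm x ^ L)"
      using near[OF True] \<open>x \<noteq> 0\<close> by (simp add: mult_ac)
    finally have "norm (1 / (1 - exp (- x)) - bernoulli_laurent L x) \<le> M * norm x ^ L"
      using \<open>x \<noteq> 0\<close> by simp
    also have "\<dots> \<le> max 0 (max M K) * norm x ^ L"
      by (intro mult_right_mono) auto
    finally show ?thesis .
  next
    case False
    then have "norm (1 / (1 - exp (- x)) - bernoulli_laurent L x) \<le> K * norm x ^ L"
      using far[of x] that(2) by simp
    also have "\<dots> \<le> max 0 (max M K) * norm x ^ L"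
      by (intro mult_right_mono) auto
    finally show ?thesis .
  qed
  then show ?thesis
    by (intro exI[of _ "max 0 (max M K)"]) auto
qed

lemma summable_real_power_mult_geometric:
  fixes q :: real
  assumes "0 \<le> q" "q < 1"
  shows "summable (\<lambda>n. real n ^ k * q ^ n)"
proof (rule root_test_convergence)
  have "(\<lambda>n. root n (real n) ^ k * q) \<longlonglongrightarrow> 1 ^ k * q"
    by (intro tendsto_intros LIMSEQ_root)
  moreover have "eventually (\<lambda>n. root n (real n) ^ k * q = root n (norm (real n ^ k * q ^ n))) sequentially"
    using eventually_gt_at_top[of 0]
    by eventually_elim (use assms in \<open>simp add: real_root_mult real_root_power abs_mult\<close>)
  ultimately show "(\<lambda>n. root n (norm (real n ^ k * q ^ n))) \<longlonglongrightarrow> q"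
    by (simp add: tendsto_cong)
qed (fact assms)

lemma polylog_sums:
  assumes "norm u < 1"
  shows "(\<lambda>n. u ^ Suc n / of_nat (Suc n) powi s) sums polylog s u"
  unfolding polylog_def
proof (rule summable_sums, rule summable_comparison_test')
  show "summable (\<lambda>n. real (Suc n) ^ nat (- s) * norm u ^ Suc n)"
    using summable_real_power_mult_geometric[of "norm u" "nat (- s)"] assms
    by (subst summable_Suc_iff) simp
  fix n
  have "norm (u ^ Suc n / of_nat (Suc n) powi s) = real (Suc n) powi (- s) * norm u ^ Suc n"
    by (simp add: norm_mult norm_inverse norm_power norm_power_int power_int_minus
                  divide_inverse mult.commute del: of_nat_Suc)
  also have "\<dots> \<le> real (Suc n) powi (int (nat (- s))) * norm u ^ Suc n"
    by (intro mult_right_mono power_int_increasing) auto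
  finally show "norm (u ^ Suc n / of_nat (Suc n) powi s) \<le> real (Suc n) ^ nat (- s) * norm u ^ Suc n"
    by (simp only: power_int_of_nat)
qed

lemma polylog_1:
  assumes "norm u < 1"
  shows "polylog 1 u = - Ln (1 - u)"
proof -
  have "(\<lambda>n. - ((- (- u)) ^ n) / of_nat n) sums ln (1 + - u)"
    using assms by (intro Ln_series') simp
  then have "(\<lambda>n. - (u ^ Suc n) / of_nat (Suc n)) sums Ln (1 - u)"
    by (subst sums_Suc_iff) simp
  then have "(\<lambda>n. u ^ Suc n / of_nat (Suc n) powi 1) sums - Ln (1 - u)"
    using sums_minus by fastforce
  then show ?thesis
    using polylog_sums[OF assms, of 1] sums_unique2 by blast
qed

lemma bernoulli_laurent_scaled:
  fixes m n w z :: complex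
  assumes "m \<noteq> 0" "n \<noteq> 0" "z \<noteq> 0"
  shows "w / m * bernoulli_laurent L (m * z / n)
           = n / z * (w / m powi 2) + w / m / 2
             + (\<Sum>l=2..L. of_real (bernoulli l / fact l) * (z / n) ^ (l - 1) * (w / m powi (2 - int l)))"
proof -
  have "w / m * (m * z / n) ^ (l - 1) = (z / n) ^ (l - 1) * (w / m powi (2 - int l))"
    if "l \<ge> 2" for l
  proof -
    have "2 - int l = - int (l - 2)"
      using that by simp
    then have "m powi (2 - int l) = inverse (m ^ (l - 2))"
      by (simp only: power_int_minus power_int_of_nat)
    moreover have "m ^ (l - 1) = m * m ^ (l - 2)"
      using that by (simp flip: power_Suc add: Suc_diff_Suc numeral_2_eq_2)
    ultimately show ?thesis
      using assms(1) by (simp add: power_mult_distrib divide_inverse)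
  qed
  then have "w / m * (\<Sum>l=2..L. of_real (bernoulli l / fact l) * (m * z / n) ^ (l - 1))
    = (\<Sum>l=2..L. of_real (bernoulli l / fact l) * (z / n) ^ (l - 1) * (w / m powi (2 - int l)))"
    unfolding sum_distrib_left by (intro sum.cong) (auto simp: mult_ac)
  moreover have "w / m * (1 / (m * z / n)) = n / z * (w / m powi 2)"
    using assms by (simp add: power2_eq_square field_simps)
  ultimately show ?thesis
    by (simp add: bernoulli_laurent_def distrib_left)
qed

text \<open>The r-th term of -chi(-z, N) is exp z ^ (r+1) / (r+1) * 1 / (1 - exp(-x)) with
  x = (r+1) z / N (indices are shifted by one as in the definition of chi); this is its error
  when the last factor is replaced by its truncated Laurent expansion.\<close>

definition chi_remainder :: "nat \<Rightarrow> nat \<Rightarrow> complex \<Rightarrow> nat \<Rightarrow> complex" where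
  "chi_remainder L N z r = exp z ^ Suc r / of_nat (Suc r) *
     (1 / (1 - exp (- (of_nat (Suc r) * z / of_nat N)))
        - bernoulli_laurent L (of_nat (Suc r) * z / of_nat N))"

lemma bernoulli_laurent_terms_sums:
  assumes "N > 0" "Re z < 0"
  shows "(\<lambda>r. exp z ^ Suc r / of_nat (Suc r) * bernoulli_laurent L (of_nat (Suc r) * z / of_nat N))
           sums (of_nat N / z * polylog 2 (exp z) - Ln (1 - exp z) / 2
                 + (\<Sum>l=2..L. of_real (bernoulli l / fact l) * (z / of_nat N) ^ (l - 1)
                               * polylog (2 - int l) (exp z)))"
proof -
  define u where "u = exp z"
  have u: "norm u < 1"
    using assms(2) by (simp add: u_def norm_exp_eq_Re)
  have "z \<noteq> 0"
    using assms(2) by auto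
  have A: "(\<lambda>r. of_nat N / z * (u ^ Suc r / of_nat (Suc r) powi 2)) sums (of_nat N / z * polylog 2 u)"
    by (intro sums_mult polylog_sums u)
  have B: "(\<lambda>r. u ^ Suc r / of_nat (Suc r) / 2) sums (- Ln (1 - u) / 2)"
    using sums_divide[OF polylog_sums[OF u, of 1], of 2] polylog_1[OF u] by simp
  have D: "(\<lambda>r. \<Sum>l=2..L. of_real (bernoulli l / fact l) * (z / of_nat N) ^ (l - 1)
                        * (u ^ Suc r / of_nat (Suc r) powi (2 - int l)))
      sums (\<Sum>l=2..L. of_real (bernoulli l / fact l) * (z / of_nat N) ^ (l - 1) * polylog (2 - int l) u)"
    by (intro sums_sum sums_mult polylog_sums u)
  have "u ^ Suc r / of_nat (Suc r) * bernoulli_laurent L (of_nat (Suc r) * z / of_nat N)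
          = of_nat N / z * (u ^ Suc r / of_nat (Suc r) powi 2) + u ^ Suc r / of_nat (Suc r) / 2
            + (\<Sum>l=2..L. of_real (bernoulli l / fact l) * (z / of_nat N) ^ (l - 1)
                          * (u ^ Suc r / of_nat (Suc r) powi (2 - int l)))" for r
    using assms(1) \<open>z \<noteq> 0\<close> by (intro bernoulli_laurent_scaled) (auto simp del: of_nat_Suc)
  then show ?thesis
    using sums_add[OF sums_add[OF A B] D] by (simp add: u_def)
qed

lemma chi_term_eq:
  fixes z :: complex and N r :: nat
  defines "x \<equiv> of_nat (Suc r) * z / of_nat N"
  shows "exp (- of_nat (Suc r) * - z) / (of_nat (Suc r) * (exp (of_nat (Suc r) * - z / of_real (real N)) - 1))
           = - (exp z ^ Suc r / of_nat (Suc r) * bernoulli_laurent L x + chi_remainder L N z r)"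
proof -
  have "exp (of_nat (Suc r) * - z / of_real (real N)) - 1 = - (1 - exp (- x))"
    by (simp add: x_def)
  moreover have "exp (- of_nat (Suc r) * - z) = exp (of_nat (Suc r) * z)"
    by (simp only: mult_minus_left mult_minus_right minus_minus)
  then have "exp (- of_nat (Suc r) * - z) = exp z ^ Suc r"
    by (simp only: exp_of_nat_mult)
  ultimately have "exp (- of_nat (Suc r) * - z) / (of_nat (Suc r) * (exp (of_nat (Suc r) * - z / of_real (real N)) - 1))
      = - (exp z ^ Suc r / (of_nat (Suc r) * (1 - exp (- x))))"
    by (metis mult_minus_right divide_minus_right)
  also have "\<dots> = - (exp z ^ Suc r / of_nat (Suc r) * bernoulli_laurent L x + chi_remainder L N z r)"
    by (simp add: chi_remainder_def x_def right_diff_distrib)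
  finally show ?thesis .
qed

lemma chi_expansion_remainder:
  fixes z :: complex
  assumes "N > 0" "Re z < 0" "summable (chi_remainder L N z)"
  shows "- chi (- z) (real N)
           - (of_nat N / z * polylog 2 (exp z) - Ln (1 - exp z) / 2
              + (\<Sum>l=2..L. of_real (bernoulli l / fact l) * (z / of_nat N) ^ (l - 1)
                            * polylog (2 - int l) (exp z)))
         = suminf (chi_remainder L N z)"
proof -
  have "(\<lambda>r. exp z ^ Suc r / of_nat (Suc r) * bernoulli_laurent L (of_nat (Suc r) * z / of_nat N)
              + chi_remainder L N z r)
          sums (of_nat N / z * polylog 2 (exp z) - Ln (1 - exp z) / 2
                + (\<Sum>l=2..L. of_real (bernoulli l / fact l) * (z / of_nat N) ^ (l - 1)
                              * polylog (2 - int l) (exp z))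
                + suminf (chi_remainder L N z))"
    using assms by (intro sums_add bernoulli_laurent_terms_sums summable_sums)
  from sums_minus[OF this] show ?thesis
    unfolding chi_term_eq[symmetric] chi_def by (simp add: sums_iff)
qed

lemma norm_chi_remainder_le:
  assumes cone: "\<And>x. x \<noteq> 0 \<Longrightarrow> Re x \<le> - (\<delta> / C) * norm x \<Longrightarrow>
                   norm (1 / (1 - exp (- x)) - bernoulli_laurent L x) \<le> K * norm x ^ L"
    and "0 \<le> K" "0 < \<delta>" "0 < C" "N > 0" "Re z \<le> - \<delta>" "norm z \<le> C" "L \<ge> 1"
  shows "norm (chi_remainder L N z r)
           \<le> K * C ^ L / real N ^ L * (exp (- \<delta>) ^ Suc r * real (Suc r) ^ (L - 1))"
proof -
  define m where "m = real (Suc r)"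
  define x where "x = of_nat (Suc r) * z / of_nat N"
  have x_eq: "x = of_real (m / real N) * z" and "0 < m / real N"
    using assms(5) by (simp_all add: x_def m_def)
  have norm_x: "norm x = m / real N * norm z" and Re_x: "Re x = m / real N * Re z"
    using \<open>0 < m / real N\<close> unfolding x_eq by (simp_all add: norm_mult m_def del: of_real_divide)
  have "\<delta> / C * norm z \<le> \<delta>"
    using assms(3,4,7) by (simp add: field_simps mult_left_mono)
  then have "Re z \<le> - (\<delta> / C) * norm z"
    using assms(6) by linarith
  then have "m / real N * Re z \<le> m / real N * (- (\<delta> / C) * norm z)"
    using \<open>0 < m / real N\<close> by (intro mult_left_mono) auto
  then have "Re x \<le> - (\<delta> / C) * norm x"
    unfolding norm_x Re_x by (simp add: mult_ac)
  moreover have "x \<noteq> 0"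
    using assms(3,5,6) by (auto simp: x_def simp del: of_nat_Suc)
  ultimately have "norm (1 / (1 - exp (- x)) - bernoulli_laurent L x) \<le> K * norm x ^ L"
    using cone by blast
  also have "\<dots> \<le> K * (m / real N * C) ^ L"
    unfolding norm_x using assms(2,7) \<open>0 < m / real N\<close>
    by (intro mult_left_mono power_mono) (auto simp del: times_divide_eq_left)
  finally have "norm (1 / (1 - exp (- x)) - bernoulli_laurent L x) \<le> K * (m / real N * C) ^ L" .
  moreover have "norm (exp z ^ Suc r) \<le> exp (- \<delta>) ^ Suc r"
    unfolding norm_power using assms(6) by (intro power_mono) (auto simp: norm_exp_eq_Re)
  ultimately have "norm (chi_remainder L N z r) \<le> exp (- \<delta>) ^ Suc r / m * (K * (m / real N * C) ^ L)"
    unfolding chi_remainder_def x_def[symmetric] norm_mult norm_divide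
    by (intro mult_mono divide_right_mono) (auto simp: m_def intro!: divide_right_mono simp del: of_nat_Suc)
  also have "\<dots> = K * C ^ L / real N ^ L * (exp (- \<delta>) ^ Suc r * m ^ (L - 1))"
    using assms(8) by (cases L) (auto simp: m_def power_mult_distrib power_divide)
  finally show ?thesis
    by (simp add: m_def)
qed

lemma norm_chi_expansion_error_le:
  assumes cone: "\<And>x. x \<noteq> 0 \<Longrightarrow> Re x \<le> - (\<delta> / C) * norm x \<Longrightarrow>
                   norm (1 / (1 - exp (- x)) - bernoulli_laurent L x) \<le> K * norm x ^ L"
    and "0 \<le> K" "0 < \<delta>" "0 < C" "N > 0" "Re z \<le> - \<delta>" "norm z \<le> C" "L \<ge> 1"
  shows "norm (- chi (- z) (real N)
                - (of_nat N / z * polylog 2 (exp z) - Ln (1 - exp z) / 2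
                   + (\<Sum>l=2..L. of_real (bernoulli l / fact l) * (z / of_nat N) ^ (l - 1)
                                 * polylog (2 - int l) (exp z))))
           \<le> K * C ^ L * (\<Sum>r. exp (- \<delta>) ^ Suc r * real (Suc r) ^ (L - 1)) / real N ^ L"
proof -
  define g where "g r = exp (- \<delta>) ^ Suc r * real (Suc r) ^ (L - 1)" for r
  define c where "c = K * C ^ L / real N ^ L"
  have "summable (\<lambda>n. real n ^ (L - 1) * exp (- \<delta>) ^ n)"
    using assms(3) by (intro summable_real_power_mult_geometric) auto
  then have "summable g"
    unfolding g_def summable_Suc_iff[of "\<lambda>n. real n ^ (L - 1) * exp (- \<delta>) ^ n", symmetric]
    by (simp add: mult.commute)
  then have summable_bound: "summable (\<lambda>r. c * g r)"
    by (rule summable_mult)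
  have bound: "norm (chi_remainder L N z r) \<le> c * g r" for r
    unfolding g_def c_def using assms by (intro norm_chi_remainder_le) auto
  have norms: "summable (\<lambda>r. norm (chi_remainder L N z r))"
    using summable_bound by (rule summable_comparison_test') (use bound in simp)
  have "Re z < 0"
    using assms(3,6) by linarith
  then have "norm (- chi (- z) (real N)
                - (of_nat N / z * polylog 2 (exp z) - Ln (1 - exp z) / 2
                   + (\<Sum>l=2..L. of_real (bernoulli l / fact l) * (z / of_nat N) ^ (l - 1)
                                 * polylog (2 - int l) (exp z))))
             = norm (suminf (chi_remainder L N z))"
    using assms(5) norms by (subst chi_expansion_remainder) (auto intro: summable_norm_cancel)
  also have "\<dots> \<le> (\<Sum>r. c * g r)"
    using norms bound summable_bound by (intro order_trans[OF summable_norm suminf_le]) auto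
  also have "\<dots> = c * suminf g"
    using \<open>summable g\<close> by (rule suminf_mult)
  finally show ?thesis
    by (simp add: c_def g_def[abs_def])
qed

theorem proposition2p4:
  fixes L :: nat and \<delta> C :: real
  assumes "L \<ge> 1" and "\<delta> > 0" and "C > 0"
  shows "\<exists>K::real. \<forall>(N::nat) (z::complex). N \<ge> 1 \<longrightarrow> Re z \<le> - \<delta> \<longrightarrow> cmod z \<le> C \<longrightarrow>
    cmod (- chi (- z) (real N)
          - (of_nat N / z * polylog 2 (exp z)
             - Ln (1 - exp z) / 2
             + (\<Sum>l=2..L. of_real (bernoulli l / fact l) * (z / of_nat N) ^ (l - 1)
                            * polylog (2 - int l) (exp z))))
      \<le> K / real N ^ L"
proof -
  obtain K where "K \<ge> 0" and cone: "\<And>x. x \<noteq> 0 \<Longrightarrow> Re x \<le> - (\<delta> / C) * norm x \<Longrightarrow>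
      norm (1 / (1 - exp (- x)) - bernoulli_laurent L x) \<le> K * norm x ^ L"
    using bernoulli_laurent_error_cone[of "\<delta> / C" L] assms by auto
  show ?thesis
    using norm_chi_expansion_error_le[OF cone \<open>K \<ge> 0\<close> assms(2,3) _ _ _ assms(1)]
    by (intro exI[of _ "K * C ^ L * (\<Sum>r. exp (- \<delta>) ^ Suc r * real (Suc r) ^ (L - 1))"]) auto
qed

end
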